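(* Let $M\in GL(2n,\mathbb{R})$ and assume that $M^{T}GM\in\operatorname{Sp}(n)$ for every matrix of the form $$G=\begin{pmatrix} X & 0\\ 0 & X^{-1}\end{pmatrix},$$ where $X$ ranges over all real symmetric positive definite $n\times n$ matrices. Then $M$ is either symplectic or antisymplectic.
   Context: $J=\begin{pmatrix}0&I\\-I&0\end{pmatrix}$ with $I$ the $n\times n$ identity. The symplectic group is $\operatorname{Sp}(n)=\{S\in GL(2n,\mathbb{R}): S^TJS=J\}$. A matrix $M\in GL(2n,\mathbb{R})$ is antisymplectic if $M^TJM=-J$, equivalently $CM\in\operatorname{Sp}(n)$ where $C=\begin{pmatrix}I&0\\0&-I\end{pmatrix}$. *)

theory Defs
  imports "HOL-Analysis.Analysis"
begin

text \<open>Real 2n x 2n matrices are indexed by the type 'n + 'n: the first block of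
coordinates (Inl) and the second block (Inr), each of size n = CARD('n).\<close>

definition block_mat ::
  "real^'n^'n \<Rightarrow> real^'n^'n \<Rightarrow> real^'n^'n \<Rightarrow> real^'n^'n \<Rightarrow> real^('n + 'n)^('n + 'n)" where
  "block_mat A B C D = (\<chi> i j. case (i, j) of
       (Inl a, Inl b) \<Rightarrow> A $ a $ b
     | (Inl a, Inr b) \<Rightarrow> B $ a $ b
     | (Inr a, Inl b) \<Rightarrow> C $ a $ b
     | (Inr a, Inr b) \<Rightarrow> D $ a $ b)"

definition symplJ :: "real^('n::finite + 'n)^('n + 'n)" where
  "symplJ = block_mat 0 (mat 1) (- mat 1) 0"

definition symplectic :: "real^('n::finite + 'n)^('n + 'n) \<Rightarrow> bool" where
  "symplectic S \<longleftrightarrow> invertible S \<and> transpose S ** symplJ ** S = symplJ"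

definition antisymplectic :: "real^('n::finite + 'n)^('n + 'n) \<Rightarrow> bool" where
  "antisymplectic M \<longleftrightarrow> invertible M \<and> transpose M ** symplJ ** M = - symplJ"

definition sym_posdef :: "real^'n^'n \<Rightarrow> bool" where
  "sym_posdef X \<longleftrightarrow> transpose X = X \<and> (\<forall>x. x \<noteq> 0 \<longrightarrow> x \<bullet> (X *v x) > 0)"

end

theory Submission imports Defs begin

(* Put J = symplJ and K = M J M^T.  For an SPD matrix X write
   G_X = diag(X, X^-1); it is symmetric, so S = M^T G_X M is a symmetric
   symplectic matrix and S J S = J, i.e. M^T (G_X K G_X) M = J.  Taking X = I
   gives M^T K M = J, and cancelling the invertible M shows that K is invariant:
   G_X K G_X = K for every SPD X.  Writing K in n x n blocks P Q R T, invariance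
   under X = 2I kills the diagonal blocks, invariance for all X forces Q to commute
   with every SPD matrix, hence to be scalar (test with the SPD matrices
   3I + E_ab + E_ba), and the antisymmetry of K gives R = -Q^T.  So K = cJ.  Since
   J^2 = -I, the relation M J M^T = cJ transposes into M^T J M = cJ, and then
   J = M^T K M = c^2 J forces c = 1 or c = -1.
   The file develops: generic matrix facts, 2x2 block matrices, the commutant of
   the SPD matrices, facts about J, and finally the invariance argument. *)

lemma transpose_zero: "transpose (0::real^'n::finite^'m::finite) = 0"
  by (simp add: transpose_def vec_eq_iff)

lemma transpose_uminus: "transpose (- (A::real^'n::finite^'m::finite)) = - transpose A"
  by (simp add: transpose_def vec_eq_iff)

lemma transpose_add: "transpose ((A::real^'n::finite^'m::finite) + B) = transpose A + transpose B"
  by (simp add: transpose_def vec_eq_iff)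

lemma matrix_add_rdistrib: "((A::real^'n::finite^'m::finite) + B) ** C = A ** C + B ** C"
  by (vector matrix_matrix_mult_def sum.distrib[symmetric] field_simps)

lemma matrix_mul_uminus_right: "(A::real^'n::finite^'m::finite) ** (- B) = - (A ** (B::real^'p::finite^'n))"
  by (simp add: matrix_matrix_mult_def vec_eq_iff sum_negf)

lemma matrix_mul_uminus_left: "(- (A::real^'n::finite^'m::finite)) ** B = - (A ** (B::real^'p::finite^'n))"
  by (simp add: matrix_matrix_mult_def vec_eq_iff sum_negf)

lemma scaled_id_mv: "((c::real) *\<^sub>R mat 1) *v x = c *\<^sub>R (x::real^'n::finite)"
  unfolding vec_eq_iff matrix_vector_mult_def mat_def
  by (auto simp: if_distrib if_distribR sum.delta cong: if_cong)

lemma matrix_inv_props: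
  assumes "invertible (X::real^'n::finite^'n)"
  shows "X ** matrix_inv X = mat 1 \<and> matrix_inv X ** X = mat 1"
  using assms unfolding invertible_def matrix_inv_def by (rule someI_ex)

lemma matrix_inv_unique:
  assumes "(X::real^'n::finite^'n) ** Y = mat 1"
  shows "matrix_inv X = Y"
proof -
  have inv: "invertible X" using assms invertible_right_inverse by blast
  have "matrix_inv X = matrix_inv X ** (X ** Y)" using assms by simp
  also have "\<dots> = (matrix_inv X ** X) ** Y" by (simp add: matrix_mul_assoc)
  also have "\<dots> = Y" using matrix_inv_props[OF inv] by simp
  finally show ?thesis .
qed

lemma matrix_inv_symmetric:
  assumes "transpose X = X" "invertible (X::real^'n::finite^'n)"
  shows "transpose (matrix_inv X) = matrix_inv X"
proof -
  have "X ** transpose (matrix_inv X) = transpose (matrix_inv X ** X)"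
    using assms(1) by (simp add: matrix_transpose_mul)
  also have "\<dots> = mat 1" using matrix_inv_props[OF assms(2)] by simp
  finally show ?thesis by (rule matrix_inv_unique[symmetric])
qed

lemma congruence_cancel:
  assumes "invertible (M::real^'n::finite^'n)"
    and "transpose M ** A ** M = transpose M ** B ** M"
  shows "A = B"
proof -
  obtain Mi where MMi: "M ** Mi = mat 1" using assms(1) unfolding invertible_def by blast
  have t: "transpose Mi ** transpose M = mat 1"
    using MMi by (metis matrix_transpose_mul transpose_mat)
  have "A = (transpose Mi ** transpose M) ** A ** (M ** Mi)" using MMi t by simp
  also have "\<dots> = transpose Mi ** (transpose M ** A ** M) ** Mi" by (simp add: matrix_mul_assoc)
  also have "\<dots> = transpose Mi ** (transpose M ** B ** M) ** Mi" using assms(2) by simp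
  also have "\<dots> = (transpose Mi ** transpose M) ** B ** (M ** Mi)" by (simp add: matrix_mul_assoc)
  also have "\<dots> = B" using MMi t by simp
  finally show ?thesis .
qed

section \<open>Block matrices\<close>

lemma sum_UNIV_Plus:
  "sum f (UNIV::('a::finite + 'b::finite) set) = sum (f o Inl) UNIV + sum (f o Inr) UNIV"
  by (metis UNIV_Plus_UNIV finite sum.Plus)

lemma block_mult:
  "block_mat A B C D ** block_mat A' B' C' D' =
   block_mat (A ** A' + B ** C') (A ** B' + B ** D') (C ** A' + D ** C') (C ** B' + D ** D')"
  unfolding vec_eq_iff
proof (intro allI)
  fix i j
  show "(block_mat A B C D ** block_mat A' B' C' D') $ i $ j =
        block_mat (A ** A' + B ** C') (A ** B' + B ** D') (C ** A' + D ** C') (C ** B' + D ** D') $ i $ j"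
    by (cases i; cases j; simp add: matrix_matrix_mult_def block_mat_def sum_UNIV_Plus o_def sum.distrib)
qed

lemma block_transpose:
  "transpose (block_mat A B C D) = block_mat (transpose A) (transpose C) (transpose B) (transpose D)"
  unfolding vec_eq_iff block_mat_def transpose_def by (auto split: sum.split)

lemma block_scale: "c *\<^sub>R block_mat A B C D = block_mat (c *\<^sub>R A) (c *\<^sub>R B) (c *\<^sub>R C) (c *\<^sub>R D)"
  unfolding vec_eq_iff block_mat_def by (auto split: sum.split)

lemma block_uminus: "- block_mat A B C D = block_mat (- A) (- B) (- C) (- D)"
  unfolding vec_eq_iff block_mat_def by (auto split: sum.split)

lemma block_mat1: "mat 1 = block_mat (mat 1) 0 0 (mat 1)"
  unfolding vec_eq_iff block_mat_def mat_def by (auto split: sum.split)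

lemma block_decomp:
  "K = block_mat (\<chi> a b. K$Inl a$Inl b) (\<chi> a b. K$Inl a$Inr b) (\<chi> a b. K$Inr a$Inl b) (\<chi> a b. K$Inr a$Inr b)"
  unfolding vec_eq_iff block_mat_def by (auto split: sum.split)

lemma block_eq:
  "block_mat A B C D = block_mat A' B' C' D' \<longleftrightarrow> A = A' \<and> B = B' \<and> C = C' \<and> D = D'"
proof
  assume h: "block_mat A B C D = block_mat A' B' C' D'"
  have "\<And>i j. block_mat A B C D $ i $ j = block_mat A' B' C' D' $ i $ j" using h by simp
  then show "A = A' \<and> B = B' \<and> C = C' \<and> D = D'"
    unfolding block_mat_def vec_eq_iff
    by (metis (no_types, lifting) case_prod_conv sum.case vec_lambda_beta)
qed simp

section \<open>Symmetric positive definite matrices and their commutant\<close>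

lemma sym_posdef_invertible:
  assumes "sym_posdef (X::real^'n::finite^'n)"
  shows "invertible X"
proof -
  have "\<forall>x. X *v x = 0 \<longrightarrow> x = 0"
  proof (intro allI impI)
    fix x assume h: "X *v x = 0"
    show "x = 0"
    proof (rule ccontr)
      assume "x \<noteq> 0"
      then have "x \<bullet> (X *v x) > 0" using assms unfolding sym_posdef_def by blast
      then show False using h by simp
    qed
  qed
  then show ?thesis using invertible_left_inverse matrix_left_invertible_ker by blast
qed

lemma sym_posdef_scaled_id: "c > 0 \<Longrightarrow> sym_posdef ((c::real) *\<^sub>R mat 1 :: real^'n::finite^'n)"
  unfolding sym_posdef_def by (simp add: transpose_scalar scaled_id_mv)

lemma matrix_inv_scaled_id:
  "c \<noteq> 0 \<Longrightarrow> matrix_inv ((c::real) *\<^sub>R mat 1 :: real^'n::finite^'n) = (1/c) *\<^sub>R mat 1"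
  by (rule matrix_inv_unique) (simp add: matrix_scalar_ac)

definition Emat :: "'n::finite \<Rightarrow> 'n \<Rightarrow> real^'n^'n" where
  "Emat a b = (\<chi> i j. if i = a \<and> j = b then 1 else 0)"

lemma Emat_inner: "x \<bullet> (Emat a b *v x) = x$a * x$b"
proof -
  have "Emat a b *v x = (\<chi> i. if i = a then x$b else 0)"
    unfolding vec_eq_iff Emat_def matrix_vector_mult_def
    by (auto simp: if_distrib if_distribR sum.delta cong: if_cong)
  then show ?thesis unfolding inner_vec_def
    by (simp add: if_distrib if_distribR sum.delta cong: if_cong)
qed

lemma Emat_transpose: "transpose (Emat a b) = Emat b a"
  unfolding Emat_def transpose_def vec_eq_iff by auto

lemma Emat_left: "(Emat a b ** B) $ i $ j = (if i = a then B$b$j else 0)"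
  unfolding Emat_def matrix_matrix_mult_def
  by (auto simp: if_distrib if_distribR sum.delta cong: if_cong)

lemma Emat_right: "(B ** Emat a b) $ i $ j = (if j = b then B$i$a else 0)"
  unfolding Emat_def matrix_matrix_mult_def
  by (auto simp: if_distrib if_distribR sum.delta' cong: if_cong)

text \<open>\<open>3I + E_ab + E_ba\<close> is positive definite, since \<open>|x_a x_b| \<le> |x|^2\<close>.\<close>

lemma sym_posdef_test_matrix: "sym_posdef (3 *\<^sub>R mat 1 + Emat a b + Emat b a :: real^'n::finite^'n)"
proof -
  have sym: "transpose (3 *\<^sub>R mat 1 + Emat a b + Emat b a :: real^'n^'n) = 3 *\<^sub>R mat 1 + Emat a b + Emat b a"
    by (simp add: transpose_add transpose_scalar Emat_transpose add.commute add.left_commute)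
  have pos: "x \<bullet> ((3 *\<^sub>R mat 1 + Emat a b + Emat b a) *v x) > 0" if "x \<noteq> 0" for x :: "real^'n"
  proof -
    have e: "x \<bullet> ((3 *\<^sub>R mat 1 + Emat a b + Emat b a) *v x) = 3 * (x \<bullet> x) + 2 * (x$a * x$b)"
      by (simp add: matrix_vector_mult_add_rdistrib inner_add_right Emat_inner scaled_id_mv)
    have b: "\<bar>x$a * x$b\<bar> \<le> norm x * norm x"
      unfolding abs_mult by (intro mult_mono component_le_norm_cart) auto
    have xx: "x \<bullet> x = norm x * norm x" by (simp add: dot_square_norm power2_eq_square)
    have "norm x * norm x > 0" using that by simp
    then show ?thesis unfolding e xx using b by linarith
  qed
  show ?thesis unfolding sym_posdef_def using sym pos by blast
qed

lemma commutes_with_sym_posdef_scalar: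
  fixes B :: "real^'n::finite^'n"
  assumes "\<And>X. sym_posdef X \<Longrightarrow> X ** B = B ** X"
  shows "B = B$a$a *\<^sub>R mat 1"
proof -
  have comm: "(Emat p q + Emat q p) ** B = B ** (Emat p q + Emat q p)" for p q
  proof -
    have "3 *\<^sub>R B + (Emat p q + Emat q p) ** B = (3 *\<^sub>R mat 1 + Emat p q + Emat q p) ** B"
      by (simp only: matrix_add_rdistrib add.assoc scalar_matrix_assoc[symmetric] matrix_mul_lid)
    also have "\<dots> = B ** (3 *\<^sub>R mat 1 + Emat p q + Emat q p)"
      using assms[OF sym_posdef_test_matrix] .
    also have "\<dots> = 3 *\<^sub>R B + B ** (Emat p q + Emat q p)"
      by (simp only: matrix_add_ldistrib add.assoc matrix_scalar_ac scalar_matrix_assoc[symmetric] matrix_mul_rid)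
    finally show ?thesis by (rule add_left_imp_eq)
  qed
  have entries: "(if i = p then B$q$j else 0) + (if i = q then B$p$j else 0) =
                 (if j = q then B$i$p else 0) + (if j = p then B$i$q else 0)" for p q i j
  proof -
    have "((Emat p q + Emat q p) ** B) $ i $ j = (B ** (Emat p q + Emat q p)) $ i $ j"
      by (simp only: comm)
    then show ?thesis
      by (simp only: matrix_add_ldistrib matrix_add_rdistrib Emat_left Emat_right vector_add_component)
  qed
  have off_diag: "B$i$j = 0" if "i \<noteq> j" for i j
    using entries[of i i i j] that by simp
  have diag: "B$i$i = B$a$a" for i
    using entries[of i a i a] by (cases "i = a") simp_all
  show ?thesis
    unfolding vec_eq_iff mat_def using diag off_diag by simp
qed

section \<open>The standard symplectic matrix\<close>

lemma symplJ_square: "(symplJ :: real^('n::finite + 'n)^('n + 'n)) ** symplJ = - mat 1"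
  unfolding symplJ_def
  by (simp add: block_mult block_mat1 block_uminus matrix_mul_uminus_left matrix_mul_uminus_right)

lemma symplJ_transpose: "transpose (symplJ :: real^('n::finite + 'n)^('n + 'n)) = - symplJ"
  unfolding symplJ_def by (simp add: block_transpose block_uminus transpose_zero transpose_uminus)

lemma symplJ_entry: "(symplJ :: real^('n::finite + 'n)^('n + 'n)) $ Inl a $ Inr a = 1"
  unfolding symplJ_def block_mat_def by (simp add: mat_def)

text \<open>\<open>J\<close> is nonzero, so it is fixed by no scaling other than the identity.\<close>

lemma symplJ_scaleR_fixed:
  assumes "k *\<^sub>R (symplJ :: real^('n::finite + 'n)^('n + 'n)) = symplJ"
  shows "k = 1"
proof -
  fix a :: 'n
  have "(k *\<^sub>R (symplJ :: real^('n + 'n)^('n + 'n))) $ Inl a $ Inr a = symplJ $ Inl a $ Inr a"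
    using assms by simp
  then show ?thesis using symplJ_entry[of a] by simp
qed

text \<open>A congruence relation \<open>M J M^T = cJ\<close> can be transposed to \<open>M^T J M = cJ\<close>:
  multiply by \<open>J M\<close> on the right and use \<open>J^2 = -I\<close> twice.\<close>

lemma symplJ_congruence_transpose:
  fixes M :: "real^('n::finite + 'n)^('n + 'n)"
  assumes "invertible M" and MJM: "M ** symplJ ** transpose M = c *\<^sub>R symplJ"
  shows "transpose M ** symplJ ** M = c *\<^sub>R symplJ"
proof -
  obtain Mi where MiM: "Mi ** M = mat 1" using assms(1) unfolding invertible_def by blast
  have "Mi ** (M ** symplJ ** transpose M) ** (symplJ ** M) = symplJ ** (transpose M ** symplJ ** M)"
    by (simp add: matrix_mul_assoc MiM)
  moreover have "Mi ** (M ** symplJ ** transpose M) ** (symplJ ** M) = - (c *\<^sub>R mat 1)"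
  proof -
    have "Mi ** (M ** symplJ ** transpose M) ** (symplJ ** M) = c *\<^sub>R (Mi ** (symplJ ** symplJ) ** M)"
      unfolding MJM by (simp add: matrix_scalar_ac scalar_matrix_assoc[symmetric] matrix_mul_assoc)
    then show ?thesis
      by (simp add: symplJ_square matrix_mul_uminus_left matrix_mul_uminus_right MiM)
  qed
  ultimately have "symplJ ** (symplJ ** (transpose M ** symplJ ** M)) = symplJ ** - (c *\<^sub>R mat 1)"
    by simp
  then show ?thesis
    by (simp add: matrix_mul_assoc symplJ_square matrix_mul_uminus_left matrix_mul_uminus_right
        matrix_scalar_ac)
qed

section \<open>Block-diagonal invariance\<close>

lemma invariant_antisymmetric_multiple_of_symplJ:
  fixes K :: "real^('n::finite + 'n)^('n + 'n)"
  assumes inv: "\<And>X :: real^'n^'n. sym_posdef X \<Longrightarrow>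
      block_mat X 0 0 (matrix_inv X) ** K ** block_mat X 0 0 (matrix_inv X) = K"
    and antisym: "transpose K = - K"
  obtains c where "K = c *\<^sub>R symplJ"
proof -
  define P where "P = (\<chi> a b. K$Inl a$Inl b)"
  define Q where "Q = (\<chi> a b. K$Inl a$Inr b)"
  define R where "R = (\<chi> a b. K$Inr a$Inl b)"
  define T where "T = (\<chi> a b. K$Inr a$Inr b)"
  have Kb: "K = block_mat P Q R T" unfolding P_def Q_def R_def T_def by (rule block_decomp)
  have blocks: "X ** P ** X = P \<and> X ** Q ** matrix_inv X = Q \<and> matrix_inv X ** R ** X = R
       \<and> matrix_inv X ** T ** matrix_inv X = T"
    if X: "sym_posdef X" for X :: "real^'n^'n"
    using inv[OF X] unfolding Kb block_mult block_eq by simp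
  have two: "sym_posdef (2 *\<^sub>R mat 1 :: real^'n^'n)" by (rule sym_posdef_scaled_id) simp
  have inv2: "matrix_inv (2 *\<^sub>R mat 1 :: real^'n^'n) = (1/2) *\<^sub>R mat 1"
    by (rule matrix_inv_scaled_id) simp
  have "4 *\<^sub>R P = P" and "(1/4) *\<^sub>R T = T"
    using blocks[OF two] inv2 by (simp_all add: matrix_scalar_ac scalar_matrix_assoc[symmetric])
  then have P0: "P = 0" and T0: "T = 0"
    using scaleR_cancel_right[of 4 P 1] scaleR_cancel_right[of "1/4" T 1] by simp_all
  have "X ** Q = Q ** X" if X: "sym_posdef X" for X :: "real^'n^'n"
  proof -
    have "X ** Q ** matrix_inv X ** X = Q ** X" using blocks[OF X] by simp
    then show ?thesis
      using matrix_inv_props[OF sym_posdef_invertible[OF X]] by (simp add: matrix_mul_assoc[symmetric])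
  qed
  then have Qc: "Q = Q$undefined$undefined *\<^sub>R mat 1" by (rule commutes_with_sym_posdef_scalar)
  have "transpose R = - Q"
    using antisym unfolding Kb block_transpose block_uminus block_eq by blast
  then have "R = - transpose Q" by (metis transpose_transpose transpose_uminus)
  then have Rc: "R = - (Q$undefined$undefined *\<^sub>R mat 1)"
    by (subst (asm) Qc) (simp add: transpose_scalar)
  have "K = Q$undefined$undefined *\<^sub>R symplJ"
    unfolding Kb P0 T0 Rc symplJ_def block_scale by (subst Qc) simp
  then show ?thesis by (rule that)
qed

text \<open>Under the hypothesis of the theorem, \<open>M^T (G_X K G_X) M = J\<close> for \<open>K = M J M^T\<close>,
  because \<open>M^T G_X M\<close> is a symmetric symplectic matrix.\<close>

lemma congruence_identity:
  fixes M :: "real^('n::finite + 'n)^('n + 'n)"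
  assumes X: "sym_posdef X"
    and sympl: "symplectic (transpose M ** block_mat X 0 0 (matrix_inv X) ** M)"
  shows "transpose M ** (block_mat X 0 0 (matrix_inv X) ** (M ** symplJ ** transpose M)
           ** block_mat X 0 0 (matrix_inv X)) ** M = symplJ"
proof -
  define G where "G = block_mat X 0 0 (matrix_inv X)"
  have tX: "transpose X = X" using X unfolding sym_posdef_def by blast
  have "transpose G = G"
    unfolding G_def block_transpose transpose_zero tX
      matrix_inv_symmetric[OF tX sym_posdef_invertible[OF X]] ..
  then have "transpose (transpose M ** G ** M) = transpose M ** G ** M"
    by (simp add: matrix_transpose_mul matrix_mul_assoc)
  moreover have "transpose (transpose M ** G ** M) ** symplJ ** (transpose M ** G ** M) = symplJ"
    using sympl unfolding symplectic_def G_def by blast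
  ultimately have "(transpose M ** G ** M) ** symplJ ** (transpose M ** G ** M) = symplJ" by simp
  then show ?thesis unfolding G_def[symmetric] by (simp add: matrix_mul_assoc)
qed

lemma symplJ_image_invariant:
  fixes M :: "real^('n::finite + 'n)^('n + 'n)"
  assumes "invertible M"
    and sympl: "\<And>X :: real^'n^'n. sym_posdef X \<Longrightarrow>
           symplectic (transpose M ** block_mat X 0 0 (matrix_inv X) ** M)"
  defines "K \<equiv> M ** symplJ ** transpose M"
  shows "transpose M ** K ** M = symplJ"
    and "\<And>X :: real^'n^'n. sym_posdef X \<Longrightarrow>
           block_mat X 0 0 (matrix_inv X) ** K ** block_mat X 0 0 (matrix_inv X) = K"
proof -
  have id_spd: "sym_posdef (mat 1 :: real^'n^'n)" using sym_posdef_scaled_id[of 1] by simp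
  have "matrix_inv (mat 1 :: real^'n^'n) = mat 1" by (rule matrix_inv_unique) simp
  then show MKM: "transpose M ** K ** M = symplJ"
    using congruence_identity[OF id_spd sympl[OF id_spd]] by (simp add: K_def block_mat1[symmetric])
  fix X :: "real^'n^'n"
  assume X: "sym_posdef X"
  show "block_mat X 0 0 (matrix_inv X) ** K ** block_mat X 0 0 (matrix_inv X) = K"
    using congruence_cancel[OF assms(1)] congruence_identity[OF X sympl[OF X]] MKM
    unfolding K_def by (metis matrix_mul_assoc)
qed

theorem lemma1:
  fixes M :: "real^('n::finite + 'n)^('n + 'n)"
  assumes "invertible M"
    and "\<And>X :: real^'n^'n. sym_posdef X \<Longrightarrow>
           symplectic (transpose M ** block_mat X 0 0 (matrix_inv X) ** M)"
  shows "symplectic M \<or> antisymplectic M"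
proof -
  define K where "K = M ** symplJ ** transpose M"
  have MKM: "transpose M ** K ** M = symplJ"
    using symplJ_image_invariant(1)[OF assms] unfolding K_def .
  have "transpose K = - K"
    unfolding K_def by (simp add: matrix_transpose_mul matrix_mul_assoc symplJ_transpose
        matrix_mul_uminus_left matrix_mul_uminus_right)
  with symplJ_image_invariant(2)[OF assms] obtain c where Kc: "K = c *\<^sub>R symplJ"
    unfolding K_def[symmetric] by (rule invariant_antisymmetric_multiple_of_symplJ)
  have MJM: "transpose M ** symplJ ** M = c *\<^sub>R symplJ"
    using symplJ_congruence_transpose[OF assms(1)] Kc unfolding K_def by blast
  have "(c * c) *\<^sub>R symplJ = c *\<^sub>R (transpose M ** symplJ ** M)" unfolding MJM by simp
  also have "\<dots> = symplJ"
    using MKM unfolding Kc by (simp add: matrix_scalar_ac scalar_matrix_assoc[symmetric])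
  finally have "c = 1 \<or> c = -1" using symplJ_scaleR_fixed square_eq_1_iff by metis
  then show ?thesis
    using MJM assms(1) unfolding symplectic_def antisymplectic_def by (elim disjE) simp_all
qed

end
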